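(* Let $K\ge1$, let $c\in T_K$, and let $M=\{s\in S(\theta): A_K+B_K\theta-c\le s\le c\}$, say $M=\{s_a,s_{a+1},\dots,s_b\}$ with $s_b=c$. Then the factor $P=\lambda(\delta(a))\lambda(\delta(a+1))\cdots\lambda(\delta(b-1))$ of $\Lambda_\theta$ is a palindrome and it occurs exactly once (namely as a suffix) in the prefix $\lambda(\delta(0))\lambda(\delta(1))\cdots\lambda(\delta(b-1))$ of $\Lambda_\theta$.
   Context: Fix an irrational $\theta$ with $1<\theta<2$. Let $S(\theta)=\{i+j\theta : i,j\in\mathbb{N}_0\}$ and let $s_0<s_1<s_2<\cdots$ be its elements in increasing order. Put $\delta(n)=s_{n+1}-s_n$. Let $\lambda$ be the map from the set of values $\{\delta(n):n\ge0\}$ to $\mathbb{N}_0$ that numbers the distinct values in order of first occurrence: $\lambda(\delta(0))=0$, and the $m$-th distinct value to appear in the sequence $\delta(0),\delta(1),\dots$ (counting from $m=0$) receives label $m$. The Lambda word is $\Lambda_\theta=\lambda(\delta(0))\lambda(\delta(1))\lambda(\delta(2))\cdots$. Every positive integer $K$ is either $K=\lfloor k\theta\rfloor+k$ or $K=\lfloor k/\theta\rfloor+k$ for a unique integer $k\ge1$ (and not both). In the first case set $(A_K,B_K)=(\lfloor k\theta\rfloor,k)$; in the second case set $(A_K,B_K)=(k,\lfloor k/\theta\rfloor)$. Define $N_K=\{s\in S(\theta): \min(A_K,B_K\theta)\le s\le \max(A_K,B_K\theta)\}$ and $T_K=\{s\in S(\theta): \max N_K\le s<\max N_{K+1}\}$.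 *)

theory Defs
  imports Complex_Main
begin

definition Sth :: "real \<Rightarrow> real set" where
  "Sth \<theta> = {real i + real j * \<theta> | i j. True}"

text \<open>s_n: the n-th element (from 0) of S(theta) in increasing order.\<close>
definition sq :: "real \<Rightarrow> nat \<Rightarrow> real" where
  "sq \<theta> n = (THE x. x \<in> Sth \<theta> \<and> card {y \<in> Sth \<theta>. y < x} = n)"

definition delta :: "real \<Rightarrow> nat \<Rightarrow> real" where
  "delta \<theta> n = sq \<theta> (Suc n) - sq \<theta> n"

text \<open>Lambda word: the letter at position n is the label of delta(n), where labels number
  the distinct values in order of first occurrence; the label equals the number of distinct
  values occurring strictly before the first occurrence of delta(n).\<close>
definition Lam :: "real \<Rightarrow> nat \<Rightarrow> nat" where
  "Lam \<theta> n = card (delta \<theta> ` {..< (LEAST m. delta \<theta> m = delta \<theta> n)})"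

text \<open>(A_K, B_K) via the Beatty partition.\<close>
definition ABpair :: "real \<Rightarrow> nat \<Rightarrow> nat \<times> nat" where
  "ABpair \<theta> K =
    (if \<exists>k::nat. k \<ge> 1 \<and> K = nat \<lfloor>real k * \<theta>\<rfloor> + k
     then (let k = (THE k::nat. k \<ge> 1 \<and> K = nat \<lfloor>real k * \<theta>\<rfloor> + k)
           in (nat \<lfloor>real k * \<theta>\<rfloor>, k))
     else (let k = (THE k::nat. k \<ge> 1 \<and> K = nat \<lfloor>real k / \<theta>\<rfloor> + k)
           in (k, nat \<lfloor>real k / \<theta>\<rfloor>)))"

definition AK :: "real \<Rightarrow> nat \<Rightarrow> nat" where "AK \<theta> K = fst (ABpair \<theta> K)"
definition BK :: "real \<Rightarrow> nat \<Rightarrow> nat" where "BK \<theta> K = snd (ABpair \<theta> K)"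

definition NK :: "real \<Rightarrow> nat \<Rightarrow> real set" where
  "NK \<theta> K = {s \<in> Sth \<theta>. min (real (AK \<theta> K)) (real (BK \<theta> K) * \<theta>) \<le> s
                      \<and> s \<le> max (real (AK \<theta> K)) (real (BK \<theta> K) * \<theta>)}"

definition TK :: "real \<Rightarrow> nat \<Rightarrow> real set" where
  "TK \<theta> K = {s \<in> Sth \<theta>. Max (NK \<theta> K) \<le> s \<and> s < Max (NK \<theta> (Suc K))}"

end

theory Submission
  imports Defs
begin

text \<open>Because \<open>c \<in> T\<^sub>K\<close>, the bounds \<open>c < A\<^sub>K + 1\<close> and \<open>c < (B\<^sub>K + 1)\<theta>\<close> hold,
  so every \<open>i + j\<theta> \<le> c\<close> in \<open>S(\<theta>)\<close> has \<open>i \<le> A\<^sub>K\<close> and \<open>j \<le> B\<^sub>K\<close>. Hence the reflection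
  \<open>x \<mapsto> A\<^sub>K + B\<^sub>K\<theta> - x\<close> maps the window \<open>M\<close> onto itself; reversing the order of \<open>M\<close>, it
  reverses its gap sequence, which is therefore a palindrome, and so is its word of labels since
  equal labels mean equal gaps. An earlier occurrence of the same labels at \<open>i < a\<close> would give
  the same gaps, so the translate \<open>M - d\<close> with \<open>d = s\<^sub>a - s\<^sub>i > 0\<close> would lie in \<open>S(\<theta>)\<close>.
  But \<open>A\<^sub>K\<close> and \<open>B\<^sub>K\<theta>\<close> both lie in \<open>M\<close>, and by irrationality of \<open>\<theta>\<close> the numbers
  \<open>A\<^sub>K - d\<close> and \<open>B\<^sub>K\<theta> - d\<close> can both be in \<open>S(\<theta>)\<close> only if \<open>d \<le> 0\<close>.\<close>

lemma irrational_coordinates_unique: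
  fixes \<theta> :: real
  assumes "\<theta> \<notin> \<rat>" "of_int p + of_int q * \<theta> = of_int p' + of_int q' * \<theta>"
  shows "p = p' \<and> q = q'"
proof -
  have "q = q'"
  proof (rule ccontr)
    assume "q \<noteq> q'"
    moreover have "of_int (q - q') * \<theta> = of_int (p' - p)" using assms(2) by (simp add: algebra_simps)
    ultimately have "\<theta> = of_int (p' - p) / of_int (q - q')" by (simp add: field_simps)
    then show False using assms(1) by (simp add: Rats_divide)
  qed
  then show ?thesis using assms(2) by simp
qed

lemma ex1_with_card_below:
  fixes S :: "'a::linorder set"
  assumes finite_below: "\<And>x. finite {y \<in> S. y < x}"
    and no_max: "\<And>x. x \<in> S \<Longrightarrow> \<exists>y\<in>S. x < y"
    and "S \<noteq> {}"
  shows "\<exists>!x. x \<in> S \<and> card {y \<in> S. y < x} = n"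
proof (rule ex_ex1I)
  have finite_atMost: "finite {y \<in> S. y \<le> z}" for z
  proof (rule finite_subset)
    show "{y \<in> S. y \<le> z} \<subseteq> insert z {y \<in> S. y < z}" by auto
  qed (simp add: finite_below)
  show "\<exists>x. x \<in> S \<and> card {y \<in> S. y < x} = n"
  proof (induction n)
    case 0
    obtain z where z: "z \<in> S" using \<open>S \<noteq> {}\<close> by blast
    let ?m = "Min {y \<in> S. y \<le> z}"
    have m: "?m \<in> S" "?m \<le> z" using Min_in[OF finite_atMost] z by auto
    have "{y \<in> S. y < ?m} = {}" using finite_atMost[of z] m(2) by (auto dest: Min_le)
    then show ?case using m(1) by (metis card.empty)
  next
    case (Suc n)
    then obtain x where x: "x \<in> S" "card {y \<in> S. y < x} = n" by blast
    obtain z where z: "z \<in> S" "x < z" using no_max[OF x(1)] by blast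
    define x' where "x' = Min {y \<in> S. x < y \<and> y \<le> z}"
    have fin: "finite {y \<in> S. x < y \<and> y \<le> z}"
      by (rule finite_subset[OF _ finite_atMost[of z]]) auto
    have x': "x' \<in> S" "x < x'" "x' \<le> z"
      using Min_in[OF fin] z unfolding x'_def by auto
    have "{y \<in> S. y < x'} = insert x {y \<in> S. y < x}"
      using x x' Min_le[OF fin] unfolding x'_def by force
    then have "card {y \<in> S. y < x'} = Suc n"
      using x finite_below[of x] by simp
    then show ?case using x' by blast
  qed
next
  fix x y assume x: "x \<in> S \<and> card {y \<in> S. y < x} = n" and y: "y \<in> S \<and> card {z \<in> S. z < y} = n"
  have "card {z \<in> S. z < u} < card {z \<in> S. z < v}" if "u \<in> S" "u < v" for u v
    by (rule psubset_card_mono[OF finite_below]) (use that in auto)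
  then show "x = y" using x y by (metis less_irrefl linorder_neqE)
qed

lemma of_nat_add_mult_in_Sth [simp]: "real i + real j * \<theta> \<in> Sth \<theta>"
  unfolding Sth_def by blast

lemma Sth_add_one: "x \<in> Sth \<theta> \<Longrightarrow> x + 1 \<in> Sth \<theta>"
proof -
  assume "x \<in> Sth \<theta>"
  then obtain i j where "x = real i + real j * \<theta>" unfolding Sth_def by auto
  then have "x + 1 = real (Suc i) + real j * \<theta>" by simp
  then show ?thesis by (metis of_nat_add_mult_in_Sth)
qed

lemma finite_Sth_below:
  assumes "0 < \<theta>"
  shows "finite {y \<in> Sth \<theta>. y < x}"
proof -
  let ?N = "nat \<lceil>x\<rceil> + nat \<lceil>x / \<theta>\<rceil>"
  have "{y \<in> Sth \<theta>. y < x} \<subseteq> (\<lambda>(i, j). real i + real j * \<theta>) ` ({..?N} \<times> {..?N})"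
  proof
    fix y assume "y \<in> {y \<in> Sth \<theta>. y < x}"
    then obtain i j where y: "y = real i + real j * \<theta>" "y < x" unfolding Sth_def by auto
    have "0 \<le> real j * \<theta>" "0 \<le> real i" using assms by simp_all
    then have "real i < x" "real j * \<theta> < x" using y by linarith+
    then have "real i < x" "real j < x / \<theta>" using assms by (simp_all add: pos_less_divide_eq)
    then have "i \<le> ?N" "j \<le> ?N" by linarith+
    then show "y \<in> (\<lambda>(i, j). real i + real j * \<theta>) ` ({..?N} \<times> {..?N})" using y by force
  qed
  then show ?thesis by (rule finite_subset) auto
qed

lemma sq_spec:
  assumes "0 < \<theta>"
  shows "sq \<theta> n \<in> Sth \<theta> \<and> card {y \<in> Sth \<theta>. y < sq \<theta> n} = n"
proof -
  have "\<exists>!x. x \<in> Sth \<theta> \<and> card {y \<in> Sth \<theta>. y < x} = n"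
  proof (rule ex1_with_card_below)
    show "\<exists>y\<in>Sth \<theta>. x < y" if "x \<in> Sth \<theta>" for x
      using Sth_add_one[OF that] by force
    show "Sth \<theta> \<noteq> {}" using of_nat_add_mult_in_Sth by blast
  qed (rule finite_Sth_below[OF assms])
  then show ?thesis unfolding sq_def by (rule theI')
qed

lemma sq_in_Sth: "0 < \<theta> \<Longrightarrow> sq \<theta> n \<in> Sth \<theta>"
  using sq_spec by blast

lemma strict_mono_sq:
  assumes "0 < \<theta>"
  shows "strict_mono (sq \<theta>)"
proof (rule strict_monoI, rule ccontr)
  fix n m :: nat assume "n < m" "\<not> sq \<theta> n < sq \<theta> m"
  then have "{y \<in> Sth \<theta>. y < sq \<theta> m} \<subseteq> {y \<in> Sth \<theta>. y < sq \<theta> n}" by auto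
  then have "m \<le> n"
    using card_mono[OF finite_Sth_below[OF assms]] sq_spec[OF assms] by metis
  then show False using \<open>n < m\<close> by simp
qed

lemma card_image_lessThan_Least_less:
  fixes f :: "nat \<Rightarrow> 'a"
  assumes less: "(LEAST m. f m = f n) < (LEAST m. f m = f k)"
  shows "card (f ` {..<LEAST m. f m = f n}) < card (f ` {..<LEAST m. f m = f k})"
proof (rule psubset_card_mono)
  let ?p = "LEAST m. f m = f n" and ?q = "LEAST m. f m = f k"
  have fp: "f ?p = f n" by (rule LeastI[of _ n]) (rule refl)
  have "f ?p \<notin> f ` {..<?p}"
  proof
    assume "f ?p \<in> f ` {..<?p}"
    then obtain m where "m < ?p" "f m = f n" using fp by auto
    then show False using not_less_Least by blast
  qed
  moreover have "f ?p \<in> f ` {..<?q}" using less by (intro image_eqI[OF refl]) simp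
  ultimately have "f ` {..<?p} \<noteq> f ` {..<?q}" by blast
  moreover have "f ` {..<?p} \<subseteq> f ` {..<?q}" using less by (intro image_mono) simp
  ultimately show "f ` {..<?p} \<subset> f ` {..<?q}" by (rule psubsetI[rotated])
qed simp

lemma card_image_lessThan_Least_eq_iff:
  fixes f :: "nat \<Rightarrow> 'a"
  shows "card (f ` {..<LEAST m. f m = f n}) = card (f ` {..<LEAST m. f m = f k}) \<longleftrightarrow> f n = f k"
    (is "card (f ` {..<?p}) = card (f ` {..<?q}) \<longleftrightarrow> _")
proof
  assume card_eq: "card (f ` {..<?p}) = card (f ` {..<?q})"
  have "?p = ?q"
    using card_image_lessThan_Least_less[of f n k] card_image_lessThan_Least_less[of f k n] card_eq
    by (cases rule: linorder_cases[of ?p ?q]) simp_all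
  moreover have "f ?p = f n" "f ?q = f k"
    by (rule LeastI[of _ n], rule refl) (rule LeastI[of _ k], rule refl)
  ultimately show "f n = f k" by metis
next
  assume "f n = f k"
  then show "card (f ` {..<?p}) = card (f ` {..<?q})" by (simp only:)
qed

lemma Lam_eq_iff: "Lam \<theta> n = Lam \<theta> k \<longleftrightarrow> delta \<theta> n = delta \<theta> k"
  unfolding Lam_def by (rule card_image_lessThan_Least_eq_iff)

lemma strict_mono_nat_floor_add:
  fixes g :: "real \<Rightarrow> real"
  assumes "mono g"
  shows "strict_mono (\<lambda>k::nat. nat \<lfloor>g (real k)\<rfloor> + k)"
proof (rule strict_monoI)
  fix n m :: nat assume "n < m"
  then have "\<lfloor>g (real n)\<rfloor> \<le> \<lfloor>g (real m)\<rfloor>" using assms by (simp add: floor_mono monoD)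
  then show "nat \<lfloor>g (real n)\<rfloor> + n < nat \<lfloor>g (real m)\<rfloor> + m" using \<open>n < m\<close> by linarith
qed

lemma the_strict_mono_preimage:
  fixes g :: "nat \<Rightarrow> nat"
  assumes "strict_mono g" "k \<ge> 1" "K = g k"
  shows "(THE k. k \<ge> 1 \<and> K = g k) = k"
  using assms by (intro the_equality) (auto dest: strict_mono_eq)

text \<open>Write \<open>K = B + A\<close> with \<open>B = \<lfloor>K / (1 + \<theta>)\<rfloor>\<close>: if \<open>A < (B + 1)\<theta>\<close> then
  \<open>\<lfloor>A/\<theta>\<rfloor> = B\<close>, and otherwise \<open>\<lfloor>(B + 1)\<theta>\<rfloor> = A - 1\<close>.\<close>
lemma Beatty_cover:
  fixes \<theta> :: real
  assumes irr: "\<theta> \<notin> \<rat>" and pos: "0 < \<theta>" and "K \<ge> 1"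
    and not_first: "\<not> (\<exists>k::nat. k \<ge> 1 \<and> K = nat \<lfloor>real k * \<theta>\<rfloor> + k)"
  shows "\<exists>k::nat. k \<ge> 1 \<and> K = nat \<lfloor>real k / \<theta>\<rfloor> + k"
proof -
  define B where "B = nat \<lfloor>real K / (1 + \<theta>)\<rfloor>"
  have "real B \<le> real K / (1 + \<theta>)" "real K / (1 + \<theta>) < real B + 1"
    unfolding B_def using pos by (simp_all add: of_nat_nat)
  then have B_low: "real B * (1 + \<theta>) \<le> real K" and B_up: "real K < (real B + 1) * (1 + \<theta>)"
    using pos by (simp_all add: field_simps)
  moreover have "real B \<le> real B * (1 + \<theta>)" using pos by (simp add: distrib_left)
  ultimately have "B \<le> K" by linarith
  define A where "A = K - B"
  have K_eq: "K = B + A" and A_real: "real A = real K - real B" unfolding A_def using \<open>B \<le> K\<close> by simp_all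
  have A_low: "real B * \<theta> \<le> real A" and A_up: "real A < 1 + (real B + 1) * \<theta>"
    using B_low B_up A_real by (simp_all add: algebra_simps)
  have "A \<ge> 1"
  proof (rule ccontr)
    assume "\<not> A \<ge> 1"
    then have "A = 0" "B = K" using \<open>B \<le> K\<close> unfolding A_def by simp_all
    moreover have "0 < real K * \<theta>" using pos \<open>K \<ge> 1\<close> by simp
    ultimately show False using A_low by simp
  qed
  consider "real A < (real B + 1) * \<theta>" | "(real B + 1) * \<theta> < real A"
  proof (cases "real A = (real B + 1) * \<theta>")
    case True
    then have "of_int (int A) + of_int 0 * \<theta> = of_int 0 + of_int (int B + 1) * \<theta>" by simp
    from irrational_coordinates_unique[OF irr this] show ?thesis by simp
  qed (use that in linarith)
  then show ?thesis
  proof cases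
    case 1
    then have "\<lfloor>real A / \<theta>\<rfloor> = int B"
      using A_low pos by (intro floor_unique) (simp_all add: field_simps)
    then show ?thesis using K_eq \<open>A \<ge> 1\<close> by (intro exI[of _ A]) simp
  next
    case 2
    have "real_of_int (int (A - 1)) = real A - 1" "real (Suc B) * \<theta> = (real B + 1) * \<theta>"
      using \<open>A \<ge> 1\<close> by simp_all
    then have "\<lfloor>real (Suc B) * \<theta>\<rfloor> = int (A - 1)"
      using A_up 2 by (intro floor_unique) linarith+
    then have "K = nat \<lfloor>real (Suc B) * \<theta>\<rfloor> + Suc B" using K_eq \<open>A \<ge> 1\<close> by simp
    then have "\<exists>k::nat. k \<ge> 1 \<and> K = nat \<lfloor>real k * \<theta>\<rfloor> + k" by (intro exI[of _ "Suc B"]) simp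
    with not_first show ?thesis by contradiction
  qed
qed

lemma AK_BK_bounds:
  fixes \<theta> :: real
  assumes irr: "\<theta> \<notin> \<rat>" and pos: "0 < \<theta>" and K: "K \<ge> 1"
  shows "AK \<theta> K + BK \<theta> K = K" "real (BK \<theta> K) * \<theta> < real (AK \<theta> K) + 1"
    "real (AK \<theta> K) < (real (BK \<theta> K) + 1) * \<theta>"
proof -
  have "AK \<theta> K + BK \<theta> K = K \<and> real (BK \<theta> K) * \<theta> < real (AK \<theta> K) + 1
        \<and> real (AK \<theta> K) < (real (BK \<theta> K) + 1) * \<theta>"
  proof (cases "\<exists>k::nat. k \<ge> 1 \<and> K = nat \<lfloor>real k * \<theta>\<rfloor> + k")
    case True
    then obtain k where k: "k \<ge> 1" "K = nat \<lfloor>real k * \<theta>\<rfloor> + k" by blast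
    have mono: "mono (\<lambda>x. x * \<theta>)" using pos by (intro monoI) (simp add: mult_right_mono)
    then have "(THE k. k \<ge> 1 \<and> K = nat \<lfloor>real k * \<theta>\<rfloor> + k) = k"
      using the_strict_mono_preimage[OF strict_mono_nat_floor_add[OF mono] k] by simp
    then have AB: "AK \<theta> K = nat \<lfloor>real k * \<theta>\<rfloor>" "BK \<theta> K = k"
      unfolding AK_def BK_def ABpair_def Let_def using True by simp_all
    have "real (nat \<lfloor>real k * \<theta>\<rfloor>) = \<lfloor>real k * \<theta>\<rfloor>" using pos by simp
    moreover have "real_of_int \<lfloor>real k * \<theta>\<rfloor> \<le> real k * \<theta>" "real k * \<theta> < real_of_int \<lfloor>real k * \<theta>\<rfloor> + 1"
      by linarith+
    moreover have "real k * \<theta> < (real k + 1) * \<theta>" using pos by (simp add: distrib_right)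
    ultimately show ?thesis unfolding AB using k(2) by (intro conjI) linarith+
  next
    case False
    then obtain k where k: "k \<ge> 1" "K = nat \<lfloor>real k / \<theta>\<rfloor> + k"
      using Beatty_cover[OF irr pos K] by blast
    have mono: "mono (\<lambda>x. x / \<theta>)" using pos by (intro monoI) (simp add: divide_right_mono)
    then have "(THE k. k \<ge> 1 \<and> K = nat \<lfloor>real k / \<theta>\<rfloor> + k) = k"
      using the_strict_mono_preimage[OF strict_mono_nat_floor_add[OF mono] k] by simp
    then have "ABpair \<theta> K = (k, nat \<lfloor>real k / \<theta>\<rfloor>)"
      unfolding ABpair_def Let_def if_not_P[OF False] by simp
    then have AB: "AK \<theta> K = k" "BK \<theta> K = nat \<lfloor>real k / \<theta>\<rfloor>"
      unfolding AK_def BK_def by simp_all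
    define j where "j = nat \<lfloor>real k / \<theta>\<rfloor>"
    have "real j = \<lfloor>real k / \<theta>\<rfloor>" unfolding j_def using pos by simp
    then have "real j \<le> real k / \<theta>" "real k / \<theta> < real j + 1" by linarith+
    then have "real j * \<theta> \<le> real k" "real k < (real j + 1) * \<theta>"
      using pos by (simp_all add: field_simps)
    then show ?thesis unfolding AB j_def[symmetric] using k(2) j_def by (intro conjI) linarith+
  qed
  then show "AK \<theta> K + BK \<theta> K = K" "real (BK \<theta> K) * \<theta> < real (AK \<theta> K) + 1"
    "real (AK \<theta> K) < (real (BK \<theta> K) + 1) * \<theta>" by auto
qed

lemma strict_antimono_into_interval:
  fixes h :: "nat \<Rightarrow> nat"
  assumes into: "\<And>t. t \<le> n \<Longrightarrow> a \<le> h t \<and> h t \<le> a + n"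
    and decreasing: "\<And>t u. t < u \<Longrightarrow> u \<le> n \<Longrightarrow> h u < h t"
    and "t \<le> n"
  shows "h t = a + n - t"
proof -
  have upper: "h t + t \<le> a + n" if "t \<le> n" for t
    using that
  proof (induction t)
    case (Suc t)
    then show ?case using decreasing[of t "Suc t"] by simp
  qed (use into in simp)
  have lower: "a + n \<le> h (n - d) + (n - d)" if "d \<le> n" for d
    using that
  proof (induction d)
    case (Suc d)
    then have "h (n - d) < h (n - Suc d)" using decreasing[of "n - Suc d" "n - d"] by simp
    with Suc show ?case by linarith
  qed (use into in simp)
  have "a + n \<le> h t + t" using lower[of "n - t"] \<open>t \<le> n\<close> by simp
  with upper[OF \<open>t \<le> n\<close>] show ?thesis by linarith
qed

lemma strict_mono_reflection:
  fixes s :: "nat \<Rightarrow> real"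
  assumes mono: "strict_mono s" and "a \<le> b"
    and reflect: "\<And>x. x \<in> s ` {a..b} \<Longrightarrow> C - x \<in> s ` {a..b}"
    and "t \<le> b - a"
  shows "s (a + t) + s (b - t) = C"
proof -
  define h where "h t = (SOME m. m \<in> {a..b} \<and> s m = C - s (a + t))" for t
  have h: "h t \<in> {a..b} \<and> s (h t) = C - s (a + t)" if "t \<le> b - a" for t
  proof -
    have "s (a + t) \<in> s ` {a..b}" using that \<open>a \<le> b\<close> by (intro image_eqI[OF refl]) simp
    from reflect[OF this] obtain m where "C - s (a + t) = s m" "m \<in> {a..b}" by (rule imageE)
    then have "m \<in> {a..b} \<and> s m = C - s (a + t)" by simp
    then show ?thesis unfolding h_def by (rule someI)
  qed
  have "h t = a + (b - a) - t"
  proof (rule strict_antimono_into_interval[OF _ _ \<open>t \<le> b - a\<close>])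
    show "a \<le> h t \<and> h t \<le> a + (b - a)" if "t \<le> b - a" for t
      using h[OF that] \<open>a \<le> b\<close> by simp
    show "h u < h t" if "t < u" "u \<le> b - a" for t u
    proof -
      have "s (a + t) < s (a + u)" using mono \<open>t < u\<close> by (simp add: strict_mono_less)
      then have "s (h u) < s (h t)" using h[of t] h[of u] that by simp
      then show ?thesis using mono by (simp add: strict_mono_less)
    qed
  qed
  then have "h t = b - t" using \<open>a \<le> b\<close> by simp
  then show ?thesis using h[OF \<open>t \<le> b - a\<close>] by simp
qed

lemma telescoping_equal_gaps:
  fixes s :: "nat \<Rightarrow> real"
  assumes "\<And>t. t < n \<Longrightarrow> s (Suc (i + t)) - s (i + t) = s (Suc (a + t)) - s (a + t)"
    and "t \<le> n"
  shows "s (i + t) = s (a + t) - (s a - s i)"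
  using \<open>t \<le> n\<close>
proof (induction t)
  case (Suc t)
  then show ?case using assms(1)[of t] by simp
qed simp

lemma rev_map_upt_eq_self:
  assumes "\<And>t. t < b - a \<Longrightarrow> f (a + t) = f (b - Suc t)"
  shows "rev (map f [a..<b]) = map f [a..<b]"
proof (rule nth_equalityI)
  fix t assume "t < length (rev (map f [a..<b]))"
  then have "t < b - a" by simp
  moreover have "a + (b - a - Suc t) = b - Suc t" using \<open>t < b - a\<close> by simp
  ultimately show "rev (map f [a..<b]) ! t = map f [a..<b] ! t"
    using assms[of t] by (simp add: rev_nth)
qed simp

lemma take_drop_map_upt_eq_iff:
  assumes "i + n \<le> b"
  shows "take n (drop i (map f [0..<b])) = map f [a..<a + n] \<longleftrightarrow> (\<forall>t<n. f (i + t) = f (a + t))"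
proof -
  have "take n (drop i (map f [0..<b])) = map f [i..<i + n]"
    using assms by (simp add: drop_map take_map)
  moreover have "map f [i..<i + n] = map f [a..<a + n] \<longleftrightarrow> (\<forall>t<n. f (i + t) = f (a + t))"
    by (simp add: list_eq_iff_nth_eq)
  ultimately show ?thesis by simp
qed

lemma factor_occurs_only_at:
  assumes "a \<le> b" and earliest: "\<And>i. \<forall>t<b - a. f (i + t) = f (a + t) \<Longrightarrow> a \<le> i"
  shows "i + (b - a) \<le> b \<and> take (b - a) (drop i (map f [0..<b])) = map f [a..<b] \<longleftrightarrow> i = a"
proof
  assume "i + (b - a) \<le> b \<and> take (b - a) (drop i (map f [0..<b])) = map f [a..<b]"
  then have "i \<le> a" "\<forall>t<b - a. f (i + t) = f (a + t)"
    using take_drop_map_upt_eq_iff[of i "b - a" b f a] \<open>a \<le> b\<close> by auto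
  then show "i = a" using earliest[of i] by simp
next
  assume "i = a"
  then show "i + (b - a) \<le> b \<and> take (b - a) (drop i (map f [0..<b])) = map f [a..<b]"
    using take_drop_map_upt_eq_iff[of a "b - a" b f a] \<open>a \<le> b\<close> by simp
qed

lemma Max_NK:
  assumes "0 < \<theta>"
  shows "Max (NK \<theta> K) = max (real (AK \<theta> K)) (real (BK \<theta> K) * \<theta>)"
proof (rule Max_eqI)
  show "finite (NK \<theta> K)"
    by (rule finite_subset[OF _ finite_Sth_below[OF assms,
          of "max (real (AK \<theta> K)) (real (BK \<theta> K) * \<theta>) + 1"]]) (auto simp: NK_def)
  show "max (real (AK \<theta> K)) (real (BK \<theta> K) * \<theta>) \<in> NK \<theta> K"
    using of_nat_add_mult_in_Sth[of "AK \<theta> K" 0 \<theta>] of_nat_add_mult_in_Sth[of 0 "BK \<theta> K" \<theta>]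
    unfolding NK_def max_def by auto
qed (auto simp: NK_def)

lemma AK_BK_Suc:
  fixes \<theta> :: real
  assumes irr: "\<theta> \<notin> \<rat>" and pos: "0 < \<theta>" and K: "K \<ge> 1"
  shows "AK \<theta> (Suc K) = Suc (AK \<theta> K) \<and> BK \<theta> (Suc K) = BK \<theta> K
       \<or> AK \<theta> (Suc K) = AK \<theta> K \<and> BK \<theta> (Suc K) = Suc (BK \<theta> K)"
proof -
  have "Suc K \<ge> 1" by simp
  note bounds = AK_BK_bounds[OF irr pos K] and bounds_Suc = AK_BK_bounds[OF irr pos this]
  have "BK \<theta> (Suc K) \<le> Suc (BK \<theta> K)"
  proof (rule ccontr)
    assume "\<not> ?thesis"
    then have "real (BK \<theta> K) + 2 \<le> real (BK \<theta> (Suc K))" "real (AK \<theta> (Suc K)) + 1 \<le> real (AK \<theta> K)"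
      using bounds(1) bounds_Suc(1) by simp_all
    moreover have "(real (BK \<theta> K) + 2) * \<theta> \<le> real (BK \<theta> (Suc K)) * \<theta>"
      using calculation(1) pos by (intro mult_right_mono) simp_all
    ultimately show False using bounds(3) bounds_Suc(2) pos by (simp add: algebra_simps)
  qed
  moreover have "BK \<theta> K \<le> BK \<theta> (Suc K)"
  proof (rule ccontr)
    assume "\<not> ?thesis"
    then have "real (BK \<theta> (Suc K)) + 1 \<le> real (BK \<theta> K)" "real (AK \<theta> K) + 2 \<le> real (AK \<theta> (Suc K))"
      using bounds(1) bounds_Suc(1) by simp_all
    moreover have "(real (BK \<theta> (Suc K)) + 1) * \<theta> \<le> real (BK \<theta> K) * \<theta>"
      using calculation(1) pos by (intro mult_right_mono) simp_all
    ultimately show False using bounds(2) bounds_Suc(3) pos by (simp add: algebra_simps)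
  qed
  ultimately show ?thesis using bounds(1) bounds_Suc(1) by (auto simp: le_Suc_eq)
qed

lemma TK_bounds:
  fixes \<theta> :: real
  assumes irr: "\<theta> \<notin> \<rat>" and pos: "0 < \<theta>" and K: "K \<ge> 1" and c: "c \<in> TK \<theta> K"
  shows "real (AK \<theta> K) \<le> c" "real (BK \<theta> K) * \<theta> \<le> c"
    "c < real (AK \<theta> K) + 1" "c < (real (BK \<theta> K) + 1) * \<theta>"
proof -
  have low: "max (real (AK \<theta> K)) (real (BK \<theta> K) * \<theta>) \<le> c"
    and up: "c < max (real (AK \<theta> (Suc K))) (real (BK \<theta> (Suc K)) * \<theta>)"
    using c unfolding TK_def Max_NK[OF pos] by auto
  then show "real (AK \<theta> K) \<le> c" "real (BK \<theta> K) * \<theta> \<le> c" by simp_all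
  have "Suc K \<ge> 1" by simp
  note bounds = AK_BK_bounds[OF irr pos K] and bounds_Suc = AK_BK_bounds[OF irr pos this]
  have "c < real (AK \<theta> K) + 1 \<and> c < (real (BK \<theta> K) + 1) * \<theta>"
    using AK_BK_Suc[OF irr pos K]
  proof
    assume "AK \<theta> (Suc K) = Suc (AK \<theta> K) \<and> BK \<theta> (Suc K) = BK \<theta> K"
    then show ?thesis using up bounds(2) bounds_Suc(3) by (auto simp: max_def split: if_splits)
  next
    assume "AK \<theta> (Suc K) = AK \<theta> K \<and> BK \<theta> (Suc K) = Suc (BK \<theta> K)"
    then show ?thesis using up low bounds_Suc(2) by (auto simp: max_def algebra_simps split: if_splits)
  qed
  then show "c < real (AK \<theta> K) + 1" "c < (real (BK \<theta> K) + 1) * \<theta>" by simp_all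
qed

lemma reflection_in_Sth:
  assumes pos: "0 < \<theta>" and x: "x \<in> Sth \<theta>" "x < real A + 1" "x < (real B + 1) * \<theta>"
  shows "real A + real B * \<theta> - x \<in> Sth \<theta>"
proof -
  obtain i j where ij: "x = real i + real j * \<theta>" using x(1) unfolding Sth_def by auto
  have "0 \<le> real j * \<theta>" using pos by simp
  then have "i \<le> A" using ij x(2) by linarith
  have "real j * \<theta> < (real B + 1) * \<theta>" using ij x(3) by linarith
  then have "j \<le> B" using pos by (simp add: mult_less_cancel_right)
  have "real A + real B * \<theta> - x = real (A - i) + real (B - j) * \<theta>"
    using \<open>i \<le> A\<close> \<open>j \<le> B\<close> unfolding ij by (simp add: of_nat_diff algebra_simps)
  then show ?thesis by simp
qed

lemma translate_of_nat_and_mult_in_Sth_nonpos: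
  assumes irr: "\<theta> \<notin> \<rat>" and "0 \<le> \<theta>"
    and "real A - d \<in> Sth \<theta>" "real B * \<theta> - d \<in> Sth \<theta>"
  shows "d \<le> 0"
proof -
  obtain i1 j1 where 1: "real A - d = real i1 + real j1 * \<theta>" using assms(3) unfolding Sth_def by auto
  obtain i2 j2 where 2: "real B * \<theta> - d = real i2 + real j2 * \<theta>" using assms(4) unfolding Sth_def by auto
  have "of_int (int A - int i1) + of_int (- int j1) * \<theta> = of_int (- int i2) + of_int (int B - int j2) * \<theta>"
    using 1 2 by (simp add: algebra_simps)
  from irrational_coordinates_unique[OF irr this] have "i1 = A + i2" by linarith
  then have "d = - real i2 - real j1 * \<theta>" using 1 by simp
  moreover have "0 \<le> real j1 * \<theta>" using \<open>0 \<le> \<theta>\<close> by simp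
  ultimately show ?thesis by simp
qed

definition MK :: "real \<Rightarrow> nat \<Rightarrow> real \<Rightarrow> real set" where
  "MK \<theta> K c = {s \<in> Sth \<theta>. real (AK \<theta> K) + real (BK \<theta> K) * \<theta> - c \<le> s \<and> s \<le> c}"

lemma MK_reflect:
  fixes \<theta> :: real
  assumes irr: "\<theta> \<notin> \<rat>" and pos: "0 < \<theta>" and "K \<ge> 1" and "c \<in> TK \<theta> K"
    and x: "x \<in> MK \<theta> K c"
  shows "real (AK \<theta> K) + real (BK \<theta> K) * \<theta> - x \<in> MK \<theta> K c"
proof -
  note c_bounds = TK_bounds[OF irr pos \<open>K \<ge> 1\<close> \<open>c \<in> TK \<theta> K\<close>]
  have "x \<in> Sth \<theta>" "x \<le> c" using x unfolding MK_def by simp_all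
  then have "real (AK \<theta> K) + real (BK \<theta> K) * \<theta> - x \<in> Sth \<theta>"
    using c_bounds by (intro reflection_in_Sth[OF pos]) linarith+
  with x show ?thesis unfolding MK_def by simp
qed

lemma MK_contains:
  fixes \<theta> :: real
  assumes irr: "\<theta> \<notin> \<rat>" and pos: "0 < \<theta>" and "K \<ge> 1" and "c \<in> TK \<theta> K"
  shows "real (AK \<theta> K) \<in> MK \<theta> K c" "real (BK \<theta> K) * \<theta> \<in> MK \<theta> K c"
proof -
  have "real (AK \<theta> K) \<in> Sth \<theta>" "real (BK \<theta> K) * \<theta> \<in> Sth \<theta>"
    using of_nat_add_mult_in_Sth[of "AK \<theta> K" 0 \<theta>] of_nat_add_mult_in_Sth[of 0 "BK \<theta> K" \<theta>]
    by simp_all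
  then show "real (AK \<theta> K) \<in> MK \<theta> K c" "real (BK \<theta> K) * \<theta> \<in> MK \<theta> K c"
    using TK_bounds(1,2)[OF assms] unfolding MK_def by simp_all
qed

lemma delta_palindromic:
  assumes pos: "0 < \<theta>" and "a \<le> b"
    and reflect: "\<And>x. x \<in> sq \<theta> ` {a..b} \<Longrightarrow> C - x \<in> sq \<theta> ` {a..b}"
    and "t < b - a"
  shows "delta \<theta> (a + t) = delta \<theta> (b - Suc t)"
proof -
  note reflection = strict_mono_reflection[OF strict_mono_sq[OF pos] \<open>a \<le> b\<close> reflect]
  have "sq \<theta> (a + t) + sq \<theta> (b - t) = C" "sq \<theta> (a + Suc t) + sq \<theta> (b - Suc t) = C"
    using reflection[of t] reflection[of "Suc t"] \<open>t < b - a\<close> by simp_all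
  moreover have "b - t = Suc (b - Suc t)" using \<open>t < b - a\<close> by simp
  ultimately show ?thesis unfolding delta_def by simp
qed

lemma equal_delta_factor_not_earlier:
  assumes irr: "\<theta> \<notin> \<rat>" and pos: "0 < \<theta>"
    and A: "real A \<in> sq \<theta> ` {a..b}" and B: "real B * \<theta> \<in> sq \<theta> ` {a..b}"
    and equal: "\<And>t. t < b - a \<Longrightarrow> delta \<theta> (i + t) = delta \<theta> (a + t)"
  shows "a \<le> i"
proof (rule ccontr)
  assume "\<not> a \<le> i"
  define d where "d = sq \<theta> a - sq \<theta> i"
  have "0 < d" unfolding d_def using strict_mono_sq[OF pos] \<open>\<not> a \<le> i\<close> by (simp add: strict_mono_less)
  have shift: "x - d \<in> Sth \<theta>" if "x \<in> sq \<theta> ` {a..b}" for x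
  proof -
    from that obtain m where m: "x = sq \<theta> m" "m \<in> {a..b}" by (rule imageE)
    define t where "t = m - a"
    have t: "t \<le> b - a" "m = a + t" using m(2) unfolding t_def by auto
    have "sq \<theta> (i + t) = x - d"
      using telescoping_equal_gaps[of "b - a" "sq \<theta>" i a t] equal t m(1) unfolding d_def delta_def by simp
    then show ?thesis using sq_in_Sth[OF pos, of "i + t"] by simp
  qed
  have "d \<le> 0" using translate_of_nat_and_mult_in_Sth_nonpos[OF irr _ shift[OF A] shift[OF B]] pos by simp
  then show False using \<open>0 < d\<close> by simp
qed

theorem lemma11:
  fixes \<theta> c :: real and K a b :: nat
  assumes "\<theta> \<notin> \<rat>" and "1 < \<theta>" and "\<theta> < 2"
    and "K \<ge> 1" and "c \<in> TK \<theta> K"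
    and "a \<le> b" and "sq \<theta> b = c"
    and "sq \<theta> ` {a..b} =
         {s \<in> Sth \<theta>. real (AK \<theta> K) + real (BK \<theta> K) * \<theta> - c \<le> s \<and> s \<le> c}"
  shows "rev (map (Lam \<theta>) [a..<b]) = map (Lam \<theta>) [a..<b]
     \<and> (\<forall>i. (i + (b - a) \<le> b \<and>
              take (b - a) (drop i (map (Lam \<theta>) [0..<b])) = map (Lam \<theta>) [a..<b])
            \<longleftrightarrow> i = a)"
proof -
  have irr: "\<theta> \<notin> \<rat>" and pos: "0 < \<theta>" using assms(1,2) by simp_all
  note window = assms(8)[folded MK_def] and in_TK = assms(4,5)
  have "delta \<theta> (a + t) = delta \<theta> (b - Suc t)" if "t < b - a" for t
    using MK_reflect[OF irr pos in_TK] by (intro delta_palindromic[OF pos \<open>a \<le> b\<close> _ that]) (simp add: window)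
  then have "rev (map (Lam \<theta>) [a..<b]) = map (Lam \<theta>) [a..<b]"
    by (intro rev_map_upt_eq_self) (simp add: Lam_eq_iff)
  moreover have "a \<le> i" if "\<forall>t<b - a. Lam \<theta> (i + t) = Lam \<theta> (a + t)" for i
    using equal_delta_factor_not_earlier[OF irr pos MK_contains[OF irr pos in_TK, folded window]] that
    by (simp add: Lam_eq_iff)
  ultimately show ?thesis using factor_occurs_only_at[OF \<open>a \<le> b\<close>] by blast
qed

end
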